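(* Let $(a_n)_{n\ge1}$ be a sequence in $(0,\infty)$ such that (i) $\liminf_{N\to\infty}(a_1\cdots a_N)^{1/N}\ge 1$, and (ii) $\limsup_{N\to\infty}\frac1N\sum_{n=1}^N a_n^2\le 1$. Then, as $N\to\infty$, \[ \frac1N\sum_{n=1}^N a_n\to 1,\qquad \frac1N\sum_{n=1}^N a_n^2\to1,\qquad \frac1N\sum_{n=1}^N (a_n-1)^2\to 0 . \] *)

theory Defs
  imports "HOL-Analysis.Analysis"
begin

end

theory Submission
  imports Defs
begin

text \<open>By AM-GM the arithmetic means A_N dominate the geometric means, so liminf A_N \<ge> 1.
  The mean squared deviation from 1 equals Q_N - 2 A_N + 1 \<ge> 0, where Q_N is the mean
  of the squares; hence A_N \<le> (Q_N + 1)/2 forces limsup A_N \<le> 1, so A_N \<rightarrow> 1, and then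
  Q_N \<ge> 2 A_N - 1 forces liminf Q_N \<ge> 1, so Q_N \<rightarrow> 1 and the deviation tends to 0.\<close>

lemma sum_power2_diff_one:
  fixes f :: "'a \<Rightarrow> real"
  shows "(\<Sum>x\<in>S. (f x - 1)\<^sup>2) = (\<Sum>x\<in>S. (f x)\<^sup>2) - 2 * (\<Sum>x\<in>S. f x) + real (card S)"
  by (simp add: power2_diff sum.distrib sum_subtractf sum_distrib_left)

lemma geometric_mean_le_arithmetic_mean_interval:
  fixes a :: "nat \<Rightarrow> real"
  assumes "N \<ge> 1" and "\<And>n. n \<in> {1..N} \<Longrightarrow> a n \<ge> 0"
  shows "(\<Prod>n=1..N. a n) powr (1 / real N) \<le> (\<Sum>n=1..N. a n) / real N"
proof -
  have "(\<Prod>n\<in>{1..N}. a n) powr (1 / card {1..N}) \<le> (\<Sum>n\<in>{1..N}. a n / card {1..N})"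
    by (rule arith_geom_mean) (use assms in auto)
  then show ?thesis by (simp add: sum_divide_distrib)
qed

lemma tendsto_one_if_mean_bounds:
  fixes A Q :: "nat \<Rightarrow> real"
  assumes low: "1 \<le> liminf (\<lambda>N. ereal (A N))"
    and up: "limsup (\<lambda>N. ereal (Q N)) \<le> 1"
    and AQ: "eventually (\<lambda>N. 2 * A N - 1 \<le> Q N) sequentially"
  shows "A \<longlonglongrightarrow> 1" "Q \<longlonglongrightarrow> 1"
proof -
  have A_above: "eventually (\<lambda>N. y < A N) sequentially" if "y < 1" for y
    using low[unfolded le_Liminf_iff, rule_format, of "ereal y"] that by simp
  have Q_below: "eventually (\<lambda>N. Q N < y) sequentially" if "y > 1" for y
    using up[unfolded Limsup_le_iff, rule_format, of "ereal y"] that by simp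
  show A_lim: "A \<longlonglongrightarrow> 1"
  proof (rule order_tendstoI)
    fix y :: real assume "y > 1"
    then have "eventually (\<lambda>N. Q N < 2 * y - 1) sequentially" by (intro Q_below) simp
    with AQ show "eventually (\<lambda>N. A N < y) sequentially"
      by eventually_elim simp
  qed (rule A_above)
  show "Q \<longlonglongrightarrow> 1"
  proof (rule order_tendstoI)
    fix y :: real assume "y < 1"
    then have "eventually (\<lambda>N. (y + 1) / 2 < A N) sequentially" by (intro A_above) simp
    with AQ show "eventually (\<lambda>N. y < Q N) sequentially"
      by eventually_elim simp
  qed (rule Q_below)
qed

theorem lemma2p1:
  fixes a :: "nat \<Rightarrow> real"
  assumes pos: "\<And>n. n \<ge> 1 \<Longrightarrow> a n > 0"
    and geo: "liminf (\<lambda>N. ereal ((\<Prod>n=1..N. a n) powr (1 / real N))) \<ge> 1"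
    and sq: "limsup (\<lambda>N. ereal ((\<Sum>n=1..N. (a n)\<^sup>2) / real N)) \<le> 1"
  shows "(\<lambda>N. (\<Sum>n=1..N. a n) / real N) \<longlonglongrightarrow> 1 \<and>
         (\<lambda>N. (\<Sum>n=1..N. (a n)\<^sup>2) / real N) \<longlonglongrightarrow> 1 \<and>
         (\<lambda>N. (\<Sum>n=1..N. (a n - 1)\<^sup>2) / real N) \<longlonglongrightarrow> 0"
proof -
  define A where "A N = (\<Sum>n=1..N. a n) / real N" for N
  define Q where "Q N = (\<Sum>n=1..N. (a n)\<^sup>2) / real N" for N
  define D where "D N = (\<Sum>n=1..N. (a n - 1)\<^sup>2) / real N" for N
  have D_eq: "eventually (\<lambda>N. D N = Q N - 2 * A N + 1) sequentially"
    using eventually_ge_at_top[of 1]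
    by eventually_elim (simp add: A_def Q_def D_def sum_power2_diff_one field_simps)
  have "eventually (\<lambda>N. (\<Prod>n=1..N. a n) powr (1 / real N) \<le> A N) sequentially"
    using eventually_ge_at_top[of 1] unfolding A_def
    by eventually_elim (rule geometric_mean_le_arithmetic_mean_interval, auto simp: less_imp_le pos)
  then have "liminf (\<lambda>N. ereal ((\<Prod>n=1..N. a n) powr (1 / real N))) \<le> liminf (\<lambda>N. ereal (A N))"
    by (intro Liminf_mono) simp
  with geo have A_low: "1 \<le> liminf (\<lambda>N. ereal (A N))" by simp
  have "eventually (\<lambda>N. 2 * A N - 1 \<le> Q N) sequentially"
    using D_eq
  proof eventually_elim
    case (elim N)
    have "0 \<le> D N" unfolding D_def by (intro divide_nonneg_nonneg sum_nonneg) simp_all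
    with elim show ?case by simp
  qed
  from tendsto_one_if_mean_bounds[OF A_low sq[folded Q_def] this]
  have A_lim: "A \<longlonglongrightarrow> 1" and Q_lim: "Q \<longlonglongrightarrow> 1" .
  have "(\<lambda>N. Q N - 2 * A N + 1) \<longlonglongrightarrow> 1 - 2 * 1 + 1"
    by (intro tendsto_intros A_lim Q_lim)
  then have "D \<longlonglongrightarrow> 0"
    using D_eq by (simp add: tendsto_cong)
  with A_lim Q_lim show ?thesis unfolding A_def Q_def D_def by simp
qed

end
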